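(* Let $k$ be a number field, $\mathcal G$ a finite group, $H$ a finite abelian group, $\mu:\mathcal G\to\mathrm{Aut}(H)$ an action, $k_1/k$ a Galois extension with group identified with $\mathcal G$, and $\tau\in H$. Then $E_{k,\mu,\tau}\subseteq Z_{k_1/k,\mu,\tau}\cap k(\zeta_{o(\tau)})$, with equality if $k_1\cap k(\zeta_{o(\tau)})=k$.
   Context: $o(\tau)$ is the order of $\tau$ and $\zeta_t$ a primitive $t$-th root of unity. Let $\nu_{k,\tau}:\mathrm{Gal}(k(\zeta_{o(\tau)})/k)\to(\mathbb Z/o(\tau))^*$ be given by $g(\zeta_{o(\tau)})=\zeta_{o(\tau)}^{\nu_{k,\tau}(g)}$; $\tilde G_{k,\mu,\tau}=\{(g_1,g_2)\in\mathcal G\times\mathrm{Gal}(k(\zeta_{o(\tau)})/k):\mu(g_1)(\tau)=\tau^{\nu_{k,\tau}(g_2)}\}$; $G_{k,\mu,\tau}$ is the set of $g_2$ with $(g_1,g_2)\in\tilde G_{k,\mu,\tau}$ for some $g_1$, and $E_{k,\mu,\tau}$ is its fixed field in $k(\zeta_{o(\tau)})$. Identify $\mathrm{Gal}(k_1(\zeta_{o(\tau)})/k)$ with its image in $\mathcal G\times\mathrm{Gal}(k(\zeta_{o(\tau)})/k)$ via $g\mapsto(g|_{k_1},g|_{k(\zeta_{o(\tau)})})$, put $\tilde G_{k_1/k,\mu,\tau}=\tilde G_{k,\mu,\tau}\cap\mathrm{Gal}(k_1(\zeta_{o(\tau)})/k)$, and let $Z_{k_1/k,\mu,\tau}$ be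 its fixed field in $k_1(\zeta_{o(\tau)})$. *)

theory Defs
  imports "HOL-Algebra.Algebra" "HOL-Analysis.Analysis"
begin

text \<open>All fields are modelled as subfields of the complex numbers.\<close>

definition is_subfield_C :: "complex set \<Rightarrow> bool" where
  "is_subfield_C S \<longleftrightarrow> 0 \<in> S \<and> 1 \<in> S \<and>
     (\<forall>x\<in>S. \<forall>y\<in>S. x + y \<in> S \<and> x - y \<in> S \<and> x * y \<in> S) \<and>
     (\<forall>x\<in>S. x \<noteq> 0 \<longrightarrow> inverse x \<in> S)"

definition fin_dim_over :: "complex set \<Rightarrow> complex set \<Rightarrow> bool" where
  "fin_dim_over L K \<longleftrightarrow> (\<exists>B. finite B \<and> B \<subseteq> L \<and>
     (\<forall>x\<in>L. \<exists>c. (\<forall>b. c b \<in> K) \<and> x = (\<Sum>b\<in>B. c b * b)))"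

definition number_field :: "complex set \<Rightarrow> bool" where
  "number_field k \<longleftrightarrow> is_subfield_C k \<and> fin_dim_over k (of_rat ` UNIV)"

definition adjoin :: "complex set \<Rightarrow> complex \<Rightarrow> complex set" where
  "adjoin K z = \<Inter>{F. is_subfield_C F \<and> K \<subseteq> F \<and> z \<in> F}"

definition Gal :: "complex set \<Rightarrow> complex set \<Rightarrow> (complex \<Rightarrow> complex) set" where
  "Gal L K = {\<sigma> \<in> Bij L. (\<forall>x\<in>L. \<forall>y\<in>L. \<sigma> (x + y) = \<sigma> x + \<sigma> y \<and> \<sigma> (x * y) = \<sigma> x * \<sigma> y)
                          \<and> (\<forall>x\<in>K. \<sigma> x = x)}"

definition galois_group :: "complex set \<Rightarrow> complex set \<Rightarrow> (complex \<Rightarrow> complex) monoid" where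
  "galois_group L K = BijGroup L \<lparr>carrier := Gal L K\<rparr>"

definition fixed_field :: "complex set \<Rightarrow> (complex \<Rightarrow> complex) set \<Rightarrow> complex set" where
  "fixed_field L S = {x \<in> L. \<forall>\<sigma>\<in>S. \<sigma> x = x}"

definition galois_ext :: "complex set \<Rightarrow> complex set \<Rightarrow> bool" where
  "galois_ext L K \<longleftrightarrow> is_subfield_C K \<and> is_subfield_C L \<and> K \<subseteq> L \<and> fin_dim_over L K
     \<and> fixed_field L (Gal L K) = K"

definition zeta :: "nat \<Rightarrow> complex" where
  "zeta n = exp (2 * pi * \<i> / of_nat n)"

text \<open>nu(g): the class a in (Z/n)^* (represented by 0 <= a < n coprime to n) with g(zeta) = zeta^a.\<close>
definition nu :: "nat \<Rightarrow> (complex \<Rightarrow> complex) \<Rightarrow> nat" where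
  "nu n g = (THE a. a < n \<and> coprime a n \<and> g (zeta n) = zeta n ^ a)"

definition G_set :: "complex set \<Rightarrow> ('g, 'c) monoid_scheme \<Rightarrow> ('h, 'd) monoid_scheme
    \<Rightarrow> ('g \<Rightarrow> 'h \<Rightarrow> 'h) \<Rightarrow> 'h \<Rightarrow> (complex \<Rightarrow> complex) set" where
  "G_set k G H \<mu> \<tau> = (let n = group.ord H \<tau> in
     {g2 \<in> Gal (adjoin k (zeta n)) k. \<exists>g1\<in>carrier G. \<mu> g1 \<tau> = \<tau> [^]\<^bsub>H\<^esub> nu n g2})"

definition E_field :: "complex set \<Rightarrow> ('g, 'c) monoid_scheme \<Rightarrow> ('h, 'd) monoid_scheme
    \<Rightarrow> ('g \<Rightarrow> 'h \<Rightarrow> 'h) \<Rightarrow> 'h \<Rightarrow> complex set" where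
  "E_field k G H \<mu> \<tau> = fixed_field (adjoin k (zeta (group.ord H \<tau>))) (G_set k G H \<mu> \<tau>)"

text \<open>tilde G_{k1/k,mu,tau}: elements g of Gal(k1(zeta)/k) whose image
  (theta(g|k1), g|k(zeta)) lies in tilde G_{k,mu,tau}; theta identifies Gal(k1/k) with G.\<close>
definition Gt_rel :: "complex set \<Rightarrow> complex set \<Rightarrow> ((complex \<Rightarrow> complex) \<Rightarrow> 'g)
    \<Rightarrow> ('h, 'd) monoid_scheme \<Rightarrow> ('g \<Rightarrow> 'h \<Rightarrow> 'h) \<Rightarrow> 'h \<Rightarrow> (complex \<Rightarrow> complex) set" where
  "Gt_rel k1 k \<theta> H \<mu> \<tau> = (let n = group.ord H \<tau> in
     {g \<in> Gal (adjoin k1 (zeta n)) k.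
        \<mu> (\<theta> (restrict g k1)) \<tau> = \<tau> [^]\<^bsub>H\<^esub> nu n (restrict g (adjoin k (zeta n)))})"

definition Z_field :: "complex set \<Rightarrow> complex set \<Rightarrow> ((complex \<Rightarrow> complex) \<Rightarrow> 'g)
    \<Rightarrow> ('h, 'd) monoid_scheme \<Rightarrow> ('g \<Rightarrow> 'h \<Rightarrow> 'h) \<Rightarrow> 'h \<Rightarrow> complex set" where
  "Z_field k1 k \<theta> H \<mu> \<tau> =
     fixed_field (adjoin k1 (zeta (group.ord H \<tau>))) (Gt_rel k1 k \<theta> H \<mu> \<tau>)"

end

theory Submission
  imports Defs "HOL-Computational_Algebra.Fundamental_Theorem_Algebra"
begin

text \<open>Write n = o(\<tau>), \<zeta> = zeta n, K = k(\<zeta>) and L = k1(\<zeta>). Every automorphism of L over k maps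
  \<zeta> to a root of unity, so it preserves K, and it preserves k1 because each \<alpha> \<in> k1 is a root
  of its orbit polynomial under Gal(k1/k), whose coefficients lie in k. Restricting to K therefore
  maps the group defining Z into the group defining E, which gives E \<subseteq> Z \<inter> K.
  If k1 \<inter> K = k, the minimal polynomial of \<zeta> over k1 divides X^n - 1, so its roots lie in K and its
  coefficients in k1 \<inter> K = k. Hence any automorphism of k1 and any automorphism of K glue to an
  automorphism of L (send \<zeta> to its image under the second one), every element of the group
  defining E lifts, and the reverse inclusion follows.\<close>

lemma subfield_zero: "is_subfield_C F \<Longrightarrow> 0 \<in> F"
  by (simp add: is_subfield_C_def)

lemma subfield_one: "is_subfield_C F \<Longrightarrow> 1 \<in> F"
  by (simp add: is_subfield_C_def)

lemma subfield_add: "is_subfield_C F \<Longrightarrow> x \<in> F \<Longrightarrow> y \<in> F \<Longrightarrow> x + y \<in> F"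
  by (simp add: is_subfield_C_def)

lemma subfield_diff: "is_subfield_C F \<Longrightarrow> x \<in> F \<Longrightarrow> y \<in> F \<Longrightarrow> x - y \<in> F"
  by (simp add: is_subfield_C_def)

lemma subfield_mult: "is_subfield_C F \<Longrightarrow> x \<in> F \<Longrightarrow> y \<in> F \<Longrightarrow> x * y \<in> F"
  by (simp add: is_subfield_C_def)

lemma subfield_inverse: "is_subfield_C F \<Longrightarrow> x \<in> F \<Longrightarrow> inverse x \<in> F"
  by (cases "x = 0") (auto simp: is_subfield_C_def)

lemma subfield_uminus: "is_subfield_C F \<Longrightarrow> x \<in> F \<Longrightarrow> - x \<in> F"
  using subfield_diff[of F 0 x] subfield_zero by auto

lemma subfield_divide: "is_subfield_C F \<Longrightarrow> x \<in> F \<Longrightarrow> y \<in> F \<Longrightarrow> x / y \<in> F"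
  by (simp add: divide_inverse subfield_mult subfield_inverse)

lemma subfield_sum: "is_subfield_C F \<Longrightarrow> (\<And>i. i \<in> A \<Longrightarrow> f i \<in> F) \<Longrightarrow> sum f A \<in> F"
  by (induction A rule: infinite_finite_induct) (auto simp: subfield_zero subfield_add)

lemma subfield_power: "is_subfield_C F \<Longrightarrow> x \<in> F \<Longrightarrow> x ^ n \<in> F"
  by (induction n) (auto simp: subfield_one subfield_mult)


definition polys_over :: "complex set \<Rightarrow> complex poly set" where
  "polys_over F = {p. \<forall>i. coeff p i \<in> F}"

lemma coeff_in_polys_over: "p \<in> polys_over F \<Longrightarrow> coeff p i \<in> F"
  by (simp add: polys_over_def)

lemma pCons_in_polys_over_iff: "pCons a p \<in> polys_over F \<longleftrightarrow> a \<in> F \<and> p \<in> polys_over F"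
proof
  assume "pCons a p \<in> polys_over F"
  then have "coeff (pCons a p) 0 \<in> F" "\<And>i. coeff (pCons a p) (Suc i) \<in> F"
    by (rule coeff_in_polys_over)+
  then show "a \<in> F \<and> p \<in> polys_over F" by (simp add: polys_over_def)
qed (auto simp: polys_over_def coeff_pCons split: nat.split)

lemma polys_over_mono: "F \<subseteq> M \<Longrightarrow> p \<in> polys_over F \<Longrightarrow> p \<in> polys_over M"
  by (auto simp: polys_over_def)

lemma poly_in_subfield: "is_subfield_C M \<Longrightarrow> p \<in> polys_over M \<Longrightarrow> z \<in> M \<Longrightarrow> poly p z \<in> M"
  by (induction p) (simp_all add: pCons_in_polys_over_iff subfield_zero subfield_add subfield_mult)

lemma polys_over_zero: "is_subfield_C F \<Longrightarrow> 0 \<in> polys_over F"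
  by (simp add: polys_over_def subfield_zero)

lemma polys_over_const: "is_subfield_C F \<Longrightarrow> c \<in> F \<Longrightarrow> [:c:] \<in> polys_over F"
  by (simp add: pCons_in_polys_over_iff polys_over_zero)

lemma polys_over_one: "is_subfield_C F \<Longrightarrow> 1 \<in> polys_over F"
  by (simp add: one_pCons polys_over_const subfield_one)

lemma polys_over_add: "is_subfield_C F \<Longrightarrow> p \<in> polys_over F \<Longrightarrow> q \<in> polys_over F \<Longrightarrow> p + q \<in> polys_over F"
  by (simp add: polys_over_def subfield_add)

lemma polys_over_diff: "is_subfield_C F \<Longrightarrow> p \<in> polys_over F \<Longrightarrow> q \<in> polys_over F \<Longrightarrow> p - q \<in> polys_over F"
  by (simp add: polys_over_def subfield_diff)

lemma polys_over_uminus: "is_subfield_C F \<Longrightarrow> p \<in> polys_over F \<Longrightarrow> - p \<in> polys_over F"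
  by (simp add: polys_over_def subfield_uminus)

lemma polys_over_mult: "is_subfield_C F \<Longrightarrow> p \<in> polys_over F \<Longrightarrow> q \<in> polys_over F \<Longrightarrow> p * q \<in> polys_over F"
  by (auto simp: polys_over_def coeff_mult intro!: subfield_sum subfield_mult)

lemma polys_over_smult: "is_subfield_C F \<Longrightarrow> c \<in> F \<Longrightarrow> p \<in> polys_over F \<Longrightarrow> smult c p \<in> polys_over F"
  by (simp add: polys_over_def subfield_mult)

lemma polys_over_monom: "is_subfield_C F \<Longrightarrow> c \<in> F \<Longrightarrow> monom c n \<in> polys_over F"
  by (simp add: polys_over_def coeff_monom subfield_zero)

lemma polys_over_prod: "is_subfield_C F \<Longrightarrow> (\<And>i. i \<in> A \<Longrightarrow> f i \<in> polys_over F) \<Longrightarrow> prod f A \<in> polys_over F"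
  by (induction A rule: infinite_finite_induct) (auto simp: polys_over_one polys_over_mult)

lemma linear_factors_in_polys_over:
  "is_subfield_C F \<Longrightarrow> B \<subseteq> F \<Longrightarrow> (\<Prod>b\<in>B. [:-b, 1:]) \<in> polys_over F"
  by (intro polys_over_prod) (auto simp: pCons_in_polys_over_iff subfield_uminus subfield_one polys_over_zero)


definition ring_hom_on :: "complex set \<Rightarrow> (complex \<Rightarrow> complex) \<Rightarrow> bool" where
  "ring_hom_on M h \<longleftrightarrow>
     (\<forall>x\<in>M. \<forall>y\<in>M. h (x + y) = h x + h y \<and> h (x * y) = h x * h y) \<and> h 1 = 1"

lemma ring_hom_on_add: "ring_hom_on M h \<Longrightarrow> x \<in> M \<Longrightarrow> y \<in> M \<Longrightarrow> h (x + y) = h x + h y"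
  by (simp add: ring_hom_on_def)

lemma ring_hom_on_mult: "ring_hom_on M h \<Longrightarrow> x \<in> M \<Longrightarrow> y \<in> M \<Longrightarrow> h (x * y) = h x * h y"
  by (simp add: ring_hom_on_def)

lemma ring_hom_on_one: "ring_hom_on M h \<Longrightarrow> h 1 = 1"
  by (simp add: ring_hom_on_def)

lemma ring_hom_on_zero: "ring_hom_on M h \<Longrightarrow> is_subfield_C M \<Longrightarrow> h 0 = 0"
  using ring_hom_on_add[of M h 0 0] subfield_zero by force

lemma ring_hom_on_diff:
  assumes "ring_hom_on M h" "is_subfield_C M" "x \<in> M" "y \<in> M"
  shows "h (x - y) = h x - h y"
  using ring_hom_on_add[OF assms(1) subfield_diff[OF assms(2-4)] assms(4)] by simp

lemma ring_hom_on_sum: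
  "ring_hom_on M h \<Longrightarrow> is_subfield_C M \<Longrightarrow> (\<And>i. i \<in> A \<Longrightarrow> f i \<in> M) \<Longrightarrow> h (sum f A) = (\<Sum>i\<in>A. h (f i))"
  by (induction A rule: infinite_finite_induct) (auto simp: ring_hom_on_zero ring_hom_on_add subfield_sum)

lemma ring_hom_on_power: "ring_hom_on M h \<Longrightarrow> is_subfield_C M \<Longrightarrow> x \<in> M \<Longrightarrow> h (x ^ n) = h x ^ n"
  by (induction n) (auto simp: ring_hom_on_one ring_hom_on_mult subfield_power)

lemma ring_hom_on_inj:
  assumes h: "ring_hom_on M h" and M: "is_subfield_C M"
  shows "inj_on h M"
proof (rule inj_onI)
  fix x y assume xy: "x \<in> M" "y \<in> M" "h x = h y"
  show "x = y"
  proof (rule ccontr)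
    assume "x \<noteq> y"
    then have "h ((x - y) * inverse (x - y)) = 1" using ring_hom_on_one[OF h] by simp
    moreover have "h (x - y) = 0" using ring_hom_on_diff[OF h M xy(1,2)] xy(3) by simp
    ultimately show False
      using ring_hom_on_mult[OF h] xy M by (simp add: subfield_diff subfield_inverse)
  qed
qed

lemma ring_hom_on_poly:
  assumes h: "ring_hom_on M h" and M: "is_subfield_C M" and z: "z \<in> M"
  shows "p \<in> polys_over M \<Longrightarrow> h (poly p z) = poly (map_poly h p) (h z)"
proof (induction p)
  case 0
  then show ?case using ring_hom_on_zero[OF h M] by simp
next
  case (pCons a p)
  then have "a \<in> M" "p \<in> polys_over M" by (auto simp: pCons_in_polys_over_iff)
  with pCons.IH show ?case
    using M z by (simp add: map_poly_pCons ring_hom_on_zero[OF h M] ring_hom_on_add[OF h]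
        ring_hom_on_mult[OF h] poly_in_subfield subfield_mult)
qed

lemma map_poly_fixing:
  assumes "\<And>c. c \<in> F \<Longrightarrow> h c = c" and p: "p \<in> polys_over F"
  shows "map_poly h p = p"
proof -
  have "0 \<in> F" using coeff_in_polys_over[OF p, of "Suc (degree p)"] by (simp add: coeff_eq_0)
  then show ?thesis using assms by (intro poly_eqI) (simp add: coeff_map_poly coeff_in_polys_over)
qed

lemma ring_hom_on_poly_fixing:
  assumes "ring_hom_on M h" "is_subfield_C M" "F \<subseteq> M" "\<And>c. c \<in> F \<Longrightarrow> h c = c"
    and "p \<in> polys_over F" "z \<in> M"
  shows "h (poly p z) = poly p (h z)"
  using ring_hom_on_poly[OF assms(1,2,6) polys_over_mono[OF assms(3,5)]] map_poly_fixing[OF assms(4,5)]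
  by simp

lemma map_poly_in_polys_over:
  "ring_hom_on M h \<Longrightarrow> is_subfield_C M \<Longrightarrow> h ` M \<subseteq> N \<Longrightarrow> p \<in> polys_over M \<Longrightarrow> map_poly h p \<in> polys_over N"
  by (auto simp: polys_over_def coeff_map_poly ring_hom_on_zero)

lemma map_poly_add_on:
  "ring_hom_on M h \<Longrightarrow> is_subfield_C M \<Longrightarrow> p \<in> polys_over M \<Longrightarrow> q \<in> polys_over M \<Longrightarrow>
   map_poly h (p + q) = map_poly h p + map_poly h q"
  by (intro poly_eqI) (auto simp: coeff_map_poly ring_hom_on_zero ring_hom_on_add coeff_in_polys_over)

lemma map_poly_diff_on:
  "ring_hom_on M h \<Longrightarrow> is_subfield_C M \<Longrightarrow> p \<in> polys_over M \<Longrightarrow> q \<in> polys_over M \<Longrightarrow>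
   map_poly h (p - q) = map_poly h p - map_poly h q"
  by (intro poly_eqI) (auto simp: coeff_map_poly ring_hom_on_zero ring_hom_on_diff coeff_in_polys_over)

lemma map_poly_mult_on:
  "ring_hom_on M h \<Longrightarrow> is_subfield_C M \<Longrightarrow> p \<in> polys_over M \<Longrightarrow> q \<in> polys_over M \<Longrightarrow>
   map_poly h (p * q) = map_poly h p * map_poly h q"
  by (intro poly_eqI)
    (auto simp: coeff_map_poly ring_hom_on_zero coeff_mult ring_hom_on_sum ring_hom_on_mult
       coeff_in_polys_over subfield_mult)

lemma map_poly_linear_factors:
  assumes h: "ring_hom_on F h" and F: "is_subfield_C F" and "finite B" "B \<subseteq> F"
  shows "map_poly h (\<Prod>b\<in>B. [:-b, 1:]) = (\<Prod>b\<in>B. [:-h b, 1:])"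
  using assms(3,4)
proof (induction B rule: finite_induct)
  case empty
  then show ?case using h F by (simp add: ring_hom_on_zero ring_hom_on_one map_poly_pCons one_pCons)
next
  case (insert x B)
  have lin: "[:-x, 1:] \<in> polys_over F"
    using insert F by (simp add: pCons_in_polys_over_iff subfield_uminus subfield_one polys_over_zero)
  have "map_poly h (\<Prod>b\<in>insert x B. [:-b, 1:]) = map_poly h ([:-x, 1:] * (\<Prod>b\<in>B. [:-b, 1:]))"
    by (simp only: prod.insert[OF insert(1,2)])
  also have "\<dots> = map_poly h [:-x, 1:] * map_poly h (\<Prod>b\<in>B. [:-b, 1:])"
    using insert by (intro map_poly_mult_on[OF h F lin] linear_factors_in_polys_over[OF F]) simp
  also have "map_poly h (\<Prod>b\<in>B. [:-b, 1:]) = (\<Prod>b\<in>B. [:-h b, 1:])"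
    using insert by simp
  also have "map_poly h [:-x, 1:] = [:-h x, 1:]"
    using insert ring_hom_on_diff[OF h F, of 0 x]
    by (simp add: ring_hom_on_zero[OF h F] ring_hom_on_one[OF h] map_poly_pCons subfield_zero[OF F])
  finally show ?case by (simp only: prod.insert[OF insert(1,2)])
qed


section \<open>Simple algebraic extensions\<close>

definition algebraic_over :: "complex set \<Rightarrow> complex \<Rightarrow> bool" where
  "algebraic_over F z \<longleftrightarrow> (\<exists>p\<in>polys_over F. p \<noteq> 0 \<and> poly p z = 0)"

definition simple_ext :: "complex set \<Rightarrow> complex \<Rightarrow> complex set" where
  "simple_ext F z = {poly p z | p. p \<in> polys_over F}"

definition minimal_poly_over :: "complex set \<Rightarrow> complex \<Rightarrow> complex poly \<Rightarrow> bool" where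
  "minimal_poly_over F z m \<longleftrightarrow> m \<in> polys_over F \<and> m \<noteq> 0 \<and> poly m z = 0 \<and>
     (\<forall>p\<in>polys_over F. p \<noteq> 0 \<longrightarrow> poly p z = 0 \<longrightarrow> degree m \<le> degree p)"

lemma polys_over_division:
  assumes F: "is_subfield_C F" and m: "m \<in> polys_over F" "m \<noteq> 0"
  shows "p \<in> polys_over F \<Longrightarrow>
    \<exists>q r. q \<in> polys_over F \<and> r \<in> polys_over F \<and> p = m * q + r \<and> (r = 0 \<or> degree r < degree m)"
proof (induction "degree p" arbitrary: p rule: less_induct)
  case less
  show ?case
  proof (cases "p = 0 \<or> degree p < degree m")
    case True
    then show ?thesis using less.prems F by (intro exI[of _ 0] exI[of _ p]) (auto simp: polys_over_zero)
  next
    case False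
    then have p0: "p \<noteq> 0" and dge: "degree m \<le> degree p" by auto
    \<comment> \<open>cancel the leading term of p\<close>
    define s where "s = monom (lead_coeff p / lead_coeff m) (degree p - degree m)"
    define p' where "p' = p - s * m"
    have sF: "s \<in> polys_over F"
      unfolding s_def using less.prems m F by (intro polys_over_monom subfield_divide coeff_in_polys_over)
    have p'F: "p' \<in> polys_over F" unfolding p'_def using less.prems sF m F by (intro polys_over_diff polys_over_mult)
    have "coeff (s * m) (degree p) = lead_coeff p"
      using dge m(2) by (simp add: s_def coeff_monom_mult)
    then have top: "coeff p' (degree p) = 0" by (simp add: p'_def)
    have "degree (s * m) \<le> degree p"
      using degree_mult_le[of s m] degree_monom_le[of "lead_coeff p / lead_coeff m" "degree p - degree m"] dge
      unfolding s_def by linarith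
    then have dle: "degree p' \<le> degree p" unfolding p'_def by (intro degree_diff_le) auto
    show ?thesis
    proof (cases "p' = 0")
      case True
      then show ?thesis using sF F
        by (intro exI[of _ s] exI[of _ 0]) (auto simp: p'_def polys_over_zero mult.commute)
    next
      case False
      then have "degree p' < degree p" using dle top leading_coeff_0_iff le_neq_implies_less by metis
      from less.hyps[OF this p'F] obtain q r where qr: "q \<in> polys_over F" "r \<in> polys_over F"
        "p' = m * q + r" "r = 0 \<or> degree r < degree m" by blast
      have "p = m * (s + q) + r" using qr(3) unfolding p'_def by (simp add: algebra_simps)
      then show ?thesis using qr sF F by (intro exI[of _ "s + q"] exI[of _ r]) (auto intro: polys_over_add)
    qed
  qed
qed

lemma minimal_poly_over_exists:
  assumes F: "is_subfield_C F" and z: "algebraic_over F z"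
  obtains m where "minimal_poly_over F z m" "lead_coeff m = 1"
proof -
  define P where "P d \<longleftrightarrow> (\<exists>p\<in>polys_over F. p \<noteq> 0 \<and> poly p z = 0 \<and> degree p = d)" for d
  have "\<exists>d. P d" using z unfolding algebraic_over_def P_def by blast
  then have "P (LEAST d. P d)" by (rule LeastI_ex)
  then obtain m0 where m0: "m0 \<in> polys_over F" "m0 \<noteq> 0" "poly m0 z = 0" "degree m0 = (LEAST d. P d)"
    unfolding P_def by blast
  have least: "degree m0 \<le> degree p" if "p \<in> polys_over F" "p \<noteq> 0" "poly p z = 0" for p
    unfolding m0(4) using that by (intro Least_le) (auto simp: P_def)
  define m where "m = smult (inverse (lead_coeff m0)) m0"
  have "m \<in> polys_over F"
    unfolding m_def using F m0 by (intro polys_over_smult subfield_inverse coeff_in_polys_over)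
  then have "minimal_poly_over F z m"
    using m0(2,3) least by (simp add: minimal_poly_over_def m_def)
  moreover have "lead_coeff m = 1" using m0(2) by (simp add: m_def)
  ultimately show ?thesis by (rule that)
qed

lemma minimal_poly_over_dvd:
  assumes F: "is_subfield_C F" and m: "minimal_poly_over F z m"
    and p: "p \<in> polys_over F" "poly p z = 0"
  shows "\<exists>q\<in>polys_over F. p = m * q"
proof -
  have mF: "m \<in> polys_over F" "m \<noteq> 0" "poly m z = 0" using m by (auto simp: minimal_poly_over_def)
  obtain q r where qr: "q \<in> polys_over F" "r \<in> polys_over F" "p = m * q + r" "r = 0 \<or> degree r < degree m"
    using polys_over_division[OF F mF(1,2) p(1)] by blast
  have "poly r z = 0" using qr(3) p(2) mF(3) by simp
  then have "r = 0" using m qr(2,4) by (auto simp: minimal_poly_over_def)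
  then show ?thesis using qr by auto
qed

text \<open>Euclid's algorithm against the minimal polynomial m: if deg p < deg m, the remainder of m
  by p is a smaller polynomial whose value at z is a nonzero multiple of p(z).\<close>

lemma poly_value_invertible:
  assumes F: "is_subfield_C F" and m: "minimal_poly_over F z m"
  shows "p \<in> polys_over F \<Longrightarrow> poly p z \<noteq> 0 \<Longrightarrow> \<exists>h\<in>polys_over F. poly p z * poly h z = 1"
proof (induction "degree p" arbitrary: p rule: less_induct)
  case less
  have mF: "m \<in> polys_over F" "m \<noteq> 0" "poly m z = 0"
    and min: "\<And>q. q \<in> polys_over F \<Longrightarrow> q \<noteq> 0 \<Longrightarrow> poly q z = 0 \<Longrightarrow> degree m \<le> degree q"
    using m by (auto simp: minimal_poly_over_def)
  have p0: "p \<noteq> 0" using less.prems by auto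
  consider "degree p = 0" | "0 < degree p" "degree p < degree m" | "degree m \<le> degree p" by linarith
  then show ?case
  proof cases
    case 1
    then obtain c where p: "p = [:c:]" by (metis degree_0_id)
    then have "c \<noteq> 0" "c \<in> F" using p0 less.prems(1) by (auto simp: pCons_in_polys_over_iff)
    then show ?thesis using F p
      by (intro bexI[of _ "[:inverse c:]"]) (auto intro: polys_over_const subfield_inverse)
  next
    case 2
    obtain q r where qr: "q \<in> polys_over F" "r \<in> polys_over F" "m = p * q + r" "r = 0 \<or> degree r < degree p"
      using polys_over_division[OF F less.prems(1) p0 mF(1)] by blast
    have rz: "poly r z = - (poly p z * poly q z)"
      using mF(3) qr(3) by (simp add: eq_neg_iff_add_eq_0 add.commute)
    have "poly q z \<noteq> 0"
    proof
      assume q0: "poly q z = 0"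
      have "q \<noteq> 0" using qr(3,4) mF(2) 2 by auto
      with p0 have dpq: "degree (p * q) = degree p + degree q" by (rule degree_mult_eq)
      then have "degree m = degree (p * q)"
        using qr(3,4) by (cases "r = 0") (auto simp: degree_add_eq_left)
      then have "degree q < degree m" using dpq 2 by auto
      then show False using min[OF qr(1) \<open>q \<noteq> 0\<close> q0] by simp
    qed
    then have "poly r z \<noteq> 0" using rz less.prems(2) by simp
    then have "degree r < degree p" using qr(4) by auto
    from less.hyps[OF this qr(2) \<open>poly r z \<noteq> 0\<close>]
    obtain h where h: "h \<in> polys_over F" "poly r z * poly h z = 1" by blast
    have "poly p z * poly (- (q * h)) z = poly r z * poly h z" using rz by simp
    then show ?thesis
      using h qr F by (intro bexI[of _ "- (q * h)"]) (auto intro: polys_over_uminus polys_over_mult)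
  next
    case 3
    obtain q r where qr: "q \<in> polys_over F" "r \<in> polys_over F" "p = m * q + r" "r = 0 \<or> degree r < degree m"
      using polys_over_division[OF F mF(1,2) less.prems(1)] by blast
    have rz: "poly r z = poly p z" using qr(3) mF(3) by simp
    then have "r \<noteq> 0" using less.prems(2) by auto
    then have "degree r < degree p" using qr(4) 3 by auto
    from less.hyps[OF this qr(2)] rz less.prems(2) show ?thesis by auto
  qed
qed

lemma subfield_simple_ext:
  assumes F: "is_subfield_C F" and z: "algebraic_over F z"
  shows "is_subfield_C (simple_ext F z)"
proof -
  obtain m where m: "minimal_poly_over F z m" using minimal_poly_over_exists[OF F z] by blast
  have ring_ops: "x + y \<in> simple_ext F z \<and> x - y \<in> simple_ext F z \<and> x * y \<in> simple_ext F z"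
    if xy: "x \<in> simple_ext F z" "y \<in> simple_ext F z" for x y
  proof -
    obtain p where "p \<in> polys_over F" "x = poly p z" using xy(1) unfolding simple_ext_def by blast
    moreover obtain q where "q \<in> polys_over F" "y = poly q z" using xy(2) unfolding simple_ext_def by blast
    moreover have "x + y = poly (p + q) z" "x - y = poly (p - q) z" "x * y = poly (p * q) z"
      using calculation by auto
    ultimately show ?thesis
      unfolding simple_ext_def using F by (blast intro: polys_over_add polys_over_diff polys_over_mult)
  qed
  have inverse: "inverse x \<in> simple_ext F z" if x: "x \<in> simple_ext F z" "x \<noteq> 0" for x
  proof -
    obtain p where p: "p \<in> polys_over F" "x = poly p z" using x(1) unfolding simple_ext_def by blast
    then obtain h where "h \<in> polys_over F" "poly p z * poly h z = 1"
      using poly_value_invertible[OF F m] x(2) by blast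
    then show ?thesis unfolding simple_ext_def using p inverse_unique by blast
  qed
  have "0 \<in> simple_ext F z" "1 \<in> simple_ext F z"
    unfolding simple_ext_def using polys_over_zero[OF F] polys_over_one[OF F] by force+
  then show ?thesis unfolding is_subfield_C_def using ring_ops inverse by blast
qed

lemma adjoin_least: "is_subfield_C M \<Longrightarrow> F \<subseteq> M \<Longrightarrow> z \<in> M \<Longrightarrow> adjoin F z \<subseteq> M"
  unfolding adjoin_def by blast

lemma adjoin_base: "F \<subseteq> adjoin F z"
  unfolding adjoin_def by blast

lemma adjoin_generator: "z \<in> adjoin F z"
  unfolding adjoin_def by blast

lemma adjoin_mono: "F \<subseteq> F' \<Longrightarrow> adjoin F z \<subseteq> adjoin F' z"
  unfolding adjoin_def by blast

lemma adjoin_eq_simple_ext: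
  assumes F: "is_subfield_C F" and z: "algebraic_over F z"
  shows "adjoin F z = simple_ext F z"
proof
  have "c \<in> simple_ext F z" if "c \<in> F" for c
    unfolding simple_ext_def using polys_over_const[OF F that] by (force intro!: exI[of _ "[:c:]"])
  moreover have "z \<in> simple_ext F z"
    unfolding simple_ext_def using F
    by (force intro!: exI[of _ "[:0, 1:]"] simp: pCons_in_polys_over_iff subfield_zero subfield_one polys_over_zero)
  ultimately show "adjoin F z \<subseteq> simple_ext F z"
    using adjoin_least[OF subfield_simple_ext[OF F z]] by blast
  show "simple_ext F z \<subseteq> adjoin F z"
    unfolding adjoin_def simple_ext_def using poly_in_subfield polys_over_mono by blast
qed

lemma subfield_Inter:
  assumes "\<And>S. S \<in> \<S> \<Longrightarrow> is_subfield_C S"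
  shows "is_subfield_C (\<Inter>\<S>)"
  unfolding is_subfield_C_def
proof (intro conjI ballI impI)
  show "0 \<in> \<Inter>\<S>" "1 \<in> \<Inter>\<S>" using assms subfield_zero subfield_one by blast+
  fix x y assume "x \<in> \<Inter>\<S>" "y \<in> \<Inter>\<S>"
  then show "x + y \<in> \<Inter>\<S>" "x - y \<in> \<Inter>\<S>" "x * y \<in> \<Inter>\<S>"
    using assms subfield_add subfield_diff subfield_mult by blast+
next
  fix x assume "x \<in> \<Inter>\<S>"
  then show "inverse x \<in> \<Inter>\<S>" using assms subfield_inverse by blast
qed

lemma subfield_adjoin: "is_subfield_C (adjoin F z)"
  unfolding adjoin_def by (rule subfield_Inter) blast


lemma zeta_power_self: "n \<ge> 1 \<Longrightarrow> zeta n ^ n = 1"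
  using complex_root_unity[of n 1] by (simp add: zeta_def)

lemma root_of_unity_eq_zeta_power:
  assumes n: "n \<ge> 1" and w: "w ^ n = 1"
  obtains j where "w = zeta n ^ j"
proof -
  obtain j where j: "w = exp (2 * of_real pi * \<i> * of_nat j / of_nat n)"
    using w complex_roots_unity[OF n] by blast
  have "zeta n ^ j = exp (of_nat j * (complex_of_real (2 * pi) * \<i> / of_nat n))"
    by (simp only: zeta_def exp_of_nat_mult)
  also have "\<dots> = w" unfolding j by (simp add: field_simps)
  finally show ?thesis using that by metis
qed

lemma root_of_unity_in_adjoin_zeta:
  assumes "n \<ge> 1" "w ^ n = 1"
  shows "w \<in> adjoin F (zeta n)"
proof -
  obtain j where "w = zeta n ^ j" using root_of_unity_eq_zeta_power[OF assms] .
  then show ?thesis using subfield_power[OF subfield_adjoin adjoin_generator] by simp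
qed

lemma X_pow_minus_one_in_polys_over: "is_subfield_C F \<Longrightarrow> (monom 1 n - 1 :: complex poly) \<in> polys_over F"
  by (intro polys_over_diff polys_over_monom polys_over_one subfield_one)

lemma X_pow_minus_one_nonzero:
  assumes "n \<ge> 1"
  shows "(monom 1 n - 1 :: complex poly) \<noteq> 0"
proof
  assume "monom 1 n - 1 = (0 :: complex poly)"
  then have "coeff (monom 1 n - 1) n = (coeff 0 n :: complex)" by simp
  then show False using assms by simp
qed

lemma algebraic_zeta:
  assumes "is_subfield_C F" "n \<ge> 1"
  shows "algebraic_over F (zeta n)"
  unfolding algebraic_over_def
  using X_pow_minus_one_in_polys_over[OF assms(1)] X_pow_minus_one_nonzero[OF assms(2)]
    zeta_power_self[OF assms(2)]
  by (intro bexI[of _ "monom 1 n - 1"]) (simp_all add: poly_monom)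

lemma rsquarefree_X_pow_minus_one:
  assumes n: "n \<ge> 1"
  shows "rsquarefree (monom 1 n - 1 :: complex poly)"
  unfolding rsquarefree_roots
proof (intro allI notI)
  fix a :: complex
  assume a: "poly (monom 1 n - 1) a = 0 \<and> poly (pderiv (monom 1 n - 1)) a = 0"
  then have "a ^ n = 1" by (simp add: poly_monom)
  then have "a \<noteq> 0" using n by (cases n) auto
  have "pderiv (monom 1 n - 1 :: complex poly) = monom (of_nat n) (n - 1)"
    by (simp add: pderiv_diff pderiv_monom)
  then have "of_nat n * a ^ (n - 1) = 0" using a by (simp add: poly_monom)
  then show False using \<open>a \<noteq> 0\<close> n by simp
qed

lemma rsquarefree_dvd:
  assumes "rsquarefree q" "p dvd q"
  shows "rsquarefree p"
proof -
  have "q \<noteq> 0" using assms(1) by (simp add: rsquarefree_def)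
  then have "order a p \<le> order a q" for a using assms(2) by (rule dvd_imp_order_le)
  moreover have "p \<noteq> 0" using \<open>q \<noteq> 0\<close> assms(2) by auto
  ultimately show ?thesis using assms(1) unfolding rsquarefree_def by (metis le_Suc_eq le_zero_eq One_nat_def)
qed


lemma Gal_bij: "\<sigma> \<in> Gal L K \<Longrightarrow> bij_betw \<sigma> L L"
  by (simp add: Gal_def Bij_def)

lemma Gal_maps: "\<sigma> \<in> Gal L K \<Longrightarrow> x \<in> L \<Longrightarrow> \<sigma> x \<in> L"
  by (auto simp: Gal_def Bij_def bij_betw_def)

lemma Gal_inj: "\<sigma> \<in> Gal L K \<Longrightarrow> inj_on \<sigma> L"
  by (auto simp: Gal_def Bij_def bij_betw_def)

lemma Gal_image: "\<sigma> \<in> Gal L K \<Longrightarrow> \<sigma> ` L = L"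
  by (auto simp: Gal_def Bij_def bij_betw_def)

lemma Gal_extensional: "\<sigma> \<in> Gal L K \<Longrightarrow> \<sigma> \<in> extensional L"
  by (auto simp: Gal_def Bij_def)

lemma Gal_fixes: "\<sigma> \<in> Gal L K \<Longrightarrow> x \<in> K \<Longrightarrow> \<sigma> x = x"
  by (auto simp: Gal_def)

lemma Gal_ring_hom_on: "\<sigma> \<in> Gal L K \<Longrightarrow> 1 \<in> K \<Longrightarrow> ring_hom_on L \<sigma>"
  by (auto simp: Gal_def ring_hom_on_def)

lemma GalI:
  assumes "\<sigma> \<in> extensional L" "bij_betw \<sigma> L L"
    "\<And>x y. x \<in> L \<Longrightarrow> y \<in> L \<Longrightarrow> \<sigma> (x + y) = \<sigma> x + \<sigma> y"
    "\<And>x y. x \<in> L \<Longrightarrow> y \<in> L \<Longrightarrow> \<sigma> (x * y) = \<sigma> x * \<sigma> y"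
    "\<And>x. x \<in> K \<Longrightarrow> \<sigma> x = x"
  shows "\<sigma> \<in> Gal L K"
  using assms by (auto simp: Gal_def Bij_def)

lemma Gal_add: "\<sigma> \<in> Gal L K \<Longrightarrow> x \<in> L \<Longrightarrow> y \<in> L \<Longrightarrow> \<sigma> (x + y) = \<sigma> x + \<sigma> y"
  by (auto simp: Gal_def)

lemma Gal_mult: "\<sigma> \<in> Gal L K \<Longrightarrow> x \<in> L \<Longrightarrow> y \<in> L \<Longrightarrow> \<sigma> (x * y) = \<sigma> x * \<sigma> y"
  by (auto simp: Gal_def)

lemma Gal_id: "is_subfield_C L \<Longrightarrow> K \<subseteq> L \<Longrightarrow> restrict id L \<in> Gal L K"
  by (intro GalI) (auto simp: bij_betw_def inj_on_def subfield_add subfield_mult)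

lemma Gal_comp:
  assumes s: "s \<in> Gal L K" and t: "t \<in> Gal L K" and L: "is_subfield_C L" and KL: "K \<subseteq> L"
  shows "restrict (s \<circ> t) L \<in> Gal L K"
proof (rule GalI)
  have "bij_betw (s \<circ> t) L L" using Gal_bij[OF t] Gal_bij[OF s] by (rule bij_betw_trans)
  then show "bij_betw (restrict (s \<circ> t) L) L L" by simp
next
  fix x y assume xy: "x \<in> L" "y \<in> L"
  then have "t x \<in> L" "t y \<in> L" using Gal_maps[OF t] by auto
  then show "restrict (s \<circ> t) L (x + y) = restrict (s \<circ> t) L x + restrict (s \<circ> t) L y"
    "restrict (s \<circ> t) L (x * y) = restrict (s \<circ> t) L x * restrict (s \<circ> t) L y"
    using xy L by (simp_all add: subfield_add subfield_mult Gal_add[OF s] Gal_mult[OF s] Gal_add[OF t] Gal_mult[OF t])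
next
  fix x assume "x \<in> K"
  then show "restrict (s \<circ> t) L x = x" using KL Gal_fixes[OF s] Gal_fixes[OF t] by auto
qed simp

lemma Gal_inverse:
  assumes g: "g \<in> Gal L K" and KL: "K \<subseteq> L" and L: "is_subfield_C L"
  shows "restrict (inv_into L g) L \<in> Gal L K"
proof (rule GalI)
  have img: "g ` L = L" using g by (rule Gal_image)
  have inv_g: "inv_into L g (g a) = a" if "a \<in> L" for a using Gal_inj[OF g] that by (rule inv_into_f_f)
  show "bij_betw (restrict (inv_into L g) L) L L"
    using bij_betw_inv_into[OF Gal_bij[OF g]] by simp
  fix x y assume xy: "x \<in> L" "y \<in> L"
  define a b where "a = inv_into L g x" and "b = inv_into L g y"
  have "x \<in> g ` L" "y \<in> g ` L" using xy img by auto
  then have ab: "a \<in> L" "b \<in> L" "g a = x" "g b = y"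
    unfolding a_def b_def by (simp_all add: inv_into_into f_inv_into_f)
  have "inv_into L g (x + y) = a + b" "inv_into L g (x * y) = a * b"
    using inv_g[of "a + b"] inv_g[of "a * b"] ab L
    by (simp_all add: Gal_add[OF g] Gal_mult[OF g] subfield_add subfield_mult)
  then show "restrict (inv_into L g) L (x + y) = restrict (inv_into L g) L x + restrict (inv_into L g) L y"
    "restrict (inv_into L g) L (x * y) = restrict (inv_into L g) L x * restrict (inv_into L g) L y"
    using xy L by (simp_all add: a_def b_def subfield_add subfield_mult)
next
  fix x assume "x \<in> K"
  then have "x \<in> L" "g x = x" using KL Gal_fixes[OF g] by auto
  then show "restrict (inv_into L g) L x = x" using inv_into_f_f[OF Gal_inj[OF g], of x] by simp
qed simp

lemma Gal_restrict:
  assumes g: "g \<in> Gal L K" and "K \<subseteq> M" "M \<subseteq> L" and M: "is_subfield_C M" and onto: "g ` M = M"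
  shows "restrict g M \<in> Gal M K"
proof (rule GalI)
  have "inj_on g M" using Gal_inj[OF g] \<open>M \<subseteq> L\<close> by (rule inj_on_subset)
  then show "bij_betw (restrict g M) M M" using onto by (simp add: bij_betw_def inj_on_def)
next
  fix x y assume xy: "x \<in> M" "y \<in> M"
  then have "x \<in> L" "y \<in> L" using \<open>M \<subseteq> L\<close> by auto
  then show "restrict g M (x + y) = restrict g M x + restrict g M y"
    "restrict g M (x * y) = restrict g M x * restrict g M y"
    using xy M by (simp_all add: subfield_add subfield_mult Gal_add[OF g] Gal_mult[OF g])
next
  fix x assume "x \<in> K"
  then show "restrict g M x = x" using \<open>K \<subseteq> M\<close> Gal_fixes[OF g] by auto
qed simp

text \<open>A subfield that every automorphism maps into itself is also mapped onto itself,
  since the inverse automorphism maps it into itself as well.\<close>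

lemma Gal_restrict_stable:
  assumes L: "is_subfield_C L" and M: "is_subfield_C M" and "K \<subseteq> M" "M \<subseteq> L"
    and stable: "\<And>h x. h \<in> Gal L K \<Longrightarrow> x \<in> M \<Longrightarrow> h x \<in> M"
    and g: "g \<in> Gal L K"
  shows "restrict g M \<in> Gal M K"
proof (rule Gal_restrict[OF g \<open>K \<subseteq> M\<close> \<open>M \<subseteq> L\<close> M])
  have "x \<in> g ` M" if "x \<in> M" for x
  proof
    have "restrict (inv_into L g) L \<in> Gal L K" using g \<open>K \<subseteq> M\<close> \<open>M \<subseteq> L\<close> L by (intro Gal_inverse) auto
    then show "restrict (inv_into L g) L x \<in> M" using stable that by blast
    show "x = g (restrict (inv_into L g) L x)"
      using that \<open>M \<subseteq> L\<close> Gal_image[OF g] by (auto simp: f_inv_into_f)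
  qed
  then show "g ` M = M" using stable[OF g] by blast
qed


section \<open>Automorphisms over k preserve a Galois extension of k\<close>

text \<open>Gal(k1/k) permutes the orbit, so it fixes the coefficients of the orbit polynomial.\<close>

lemma orbit_poly_in_polys_over:
  assumes gal: "galois_ext k1 k" and fin: "finite (Gal k1 k)" and \<alpha>: "\<alpha> \<in> k1"
  shows "(\<Prod>b\<in>(\<lambda>\<sigma>. \<sigma> \<alpha>) ` Gal k1 k. [:-b, 1:]) \<in> polys_over k"
proof -
  have k: "is_subfield_C k" and k1: "is_subfield_C k1" and "k \<subseteq> k1"
    and fixed: "fixed_field k1 (Gal k1 k) = k"
    using gal by (auto simp: galois_ext_def)
  define Orb where "Orb = (\<lambda>\<sigma>. \<sigma> \<alpha>) ` Gal k1 k"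
  define q where "q = (\<Prod>b\<in>Orb. [:-b, 1:])"
  have "finite Orb" using fin by (simp add: Orb_def)
  have Orb_k1: "Orb \<subseteq> k1" using \<alpha> by (auto simp: Orb_def Gal_maps)
  have q_k1: "q \<in> polys_over k1" unfolding q_def using k1 Orb_k1 by (rule linear_factors_in_polys_over)
  have permutes: "\<sigma> ` Orb = Orb" if \<sigma>: "\<sigma> \<in> Gal k1 k" for \<sigma>
  proof -
    have "\<sigma> (\<tau> \<alpha>) \<in> Orb" if "\<tau> \<in> Gal k1 k" for \<tau>
      unfolding Orb_def by (rule rev_image_eqI[OF Gal_comp[OF \<sigma> that k1 \<open>k \<subseteq> k1\<close>]]) (simp add: \<alpha>)
    then have "\<sigma> ` Orb \<subseteq> Orb" unfolding Orb_def by blast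
    moreover have "card (\<sigma> ` Orb) = card Orb" using inj_on_subset[OF Gal_inj[OF \<sigma>] Orb_k1] by (rule card_image)
    ultimately show ?thesis using \<open>finite Orb\<close> by (simp add: card_subset_eq)
  qed
  have "\<sigma> (coeff q i) = coeff q i" if \<sigma>: "\<sigma> \<in> Gal k1 k" for \<sigma> i
  proof -
    have h: "ring_hom_on k1 \<sigma>" using \<sigma> subfield_one[OF k] by (rule Gal_ring_hom_on)
    have "map_poly \<sigma> q = (\<Prod>b\<in>Orb. [:-\<sigma> b, 1:])"
      unfolding q_def using h k1 \<open>finite Orb\<close> Orb_k1 by (rule map_poly_linear_factors)
    also have "\<dots> = (\<Prod>b\<in>\<sigma> ` Orb. [:-b, 1:])"
      using inj_on_subset[OF Gal_inj[OF \<sigma>] Orb_k1] by (simp add: prod.reindex)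
    also have "\<dots> = q" unfolding q_def permutes[OF \<sigma>] ..
    finally show ?thesis using ring_hom_on_zero[OF h k1] by (metis coeff_map_poly)
  qed
  then have "coeff q i \<in> fixed_field k1 (Gal k1 k)" for i
    unfolding fixed_field_def using coeff_in_polys_over[OF q_k1] by blast
  then show ?thesis unfolding fixed polys_over_def q_def Orb_def by blast
qed

lemma galois_ext_stable:
  assumes gal: "galois_ext k1 k" and fin: "finite (Gal k1 k)"
    and L: "is_subfield_C L" and "k1 \<subseteq> L" and g: "g \<in> Gal L k" and \<alpha>: "\<alpha> \<in> k1"
  shows "g \<alpha> \<in> k1"
proof -
  have k: "is_subfield_C k" and k1: "is_subfield_C k1" and "k \<subseteq> k1"
    using gal by (auto simp: galois_ext_def)
  define Orb where "Orb = (\<lambda>\<sigma>. \<sigma> \<alpha>) ` Gal k1 k"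
  have "finite Orb" using fin by (simp add: Orb_def)
  have "\<alpha> \<in> Orb" unfolding Orb_def by (rule rev_image_eqI[OF Gal_id[OF k1 \<open>k \<subseteq> k1\<close>]]) (simp add: \<alpha>)
  then have "poly (\<Prod>b\<in>Orb. [:-b, 1:]) \<alpha> = 0" using \<open>finite Orb\<close> by (simp add: poly_prod)
  moreover have "g (poly (\<Prod>b\<in>Orb. [:-b, 1:]) \<alpha>) = poly (\<Prod>b\<in>Orb. [:-b, 1:]) (g \<alpha>)"
    unfolding Orb_def
    by (rule ring_hom_on_poly_fixing[OF Gal_ring_hom_on[OF g subfield_one[OF k]] L _ _
          orbit_poly_in_polys_over[OF gal fin \<alpha>]])
      (use \<open>k \<subseteq> k1\<close> \<open>k1 \<subseteq> L\<close> Gal_fixes[OF g] \<alpha> in auto)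
  ultimately have "(\<Prod>b\<in>Orb. g \<alpha> - b) = 0"
    using ring_hom_on_zero[OF Gal_ring_hom_on[OF g subfield_one[OF k]] L] by (simp add: poly_prod)
  then obtain b where "b \<in> Orb" "g \<alpha> = b" using \<open>finite Orb\<close> by auto
  then show ?thesis using \<alpha> by (auto simp: Orb_def Gal_maps)
qed

lemma Gal_restrict_galois_ext:
  assumes gal: "galois_ext k1 k" and fin: "finite (Gal k1 k)"
    and L: "is_subfield_C L" and "k1 \<subseteq> L" and g: "g \<in> Gal L k"
  shows "restrict g k1 \<in> Gal k1 k"
  using gal galois_ext_stable[OF gal fin L \<open>k1 \<subseteq> L\<close>] g
  by (intro Gal_restrict_stable[OF L]) (auto simp: galois_ext_def \<open>k1 \<subseteq> L\<close>)


section \<open>Automorphisms over k preserve k(\<zeta>)\<close>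

lemma Gal_restrict_adjoin_zeta:
  assumes k: "is_subfield_C k" and n: "n \<ge> 1"
    and L: "is_subfield_C L" and KL: "adjoin k (zeta n) \<subseteq> L" and g: "g \<in> Gal L k"
  shows "restrict g (adjoin k (zeta n)) \<in> Gal (adjoin k (zeta n)) k"
proof (rule Gal_restrict_stable[OF L subfield_adjoin adjoin_base KL _ g])
  fix h x assume h: "h \<in> Gal L k" and x: "x \<in> adjoin k (zeta n)"
  have hom: "ring_hom_on L h" using h subfield_one[OF k] by (rule Gal_ring_hom_on)
  have zL: "zeta n \<in> L" using KL adjoin_generator by blast
  obtain p where p: "p \<in> polys_over k" "x = poly p (zeta n)"
    using x unfolding adjoin_eq_simple_ext[OF k algebraic_zeta[OF k n]] simple_ext_def by blast
  have "h (zeta n) ^ n = h (zeta n ^ n)" using ring_hom_on_power[OF hom L zL] by simp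
  also have "\<dots> = 1" using zeta_power_self[OF n] ring_hom_on_one[OF hom] by simp
  finally have "h (zeta n) \<in> adjoin k (zeta n)" by (rule root_of_unity_in_adjoin_zeta[OF n])
  moreover have "h x = poly p (h (zeta n))"
    unfolding p(2) using hom L KL adjoin_base[of k] Gal_fixes[OF h] p(1) zL
    by (intro ring_hom_on_poly_fixing) auto
  ultimately show "h x \<in> adjoin k (zeta n)"
    using poly_in_subfield[OF subfield_adjoin polys_over_mono[OF adjoin_base p(1)]] by simp
qed


section \<open>Gluing automorphisms of k1 and of k(\<zeta>)\<close>

text \<open>The minimal polynomial of \<zeta> over k1 divides X^n - 1, so it splits with roots in k(\<zeta>);
  hence its coefficients lie in k1 \<inter> k(\<zeta>).\<close>

lemma minimal_poly_zeta_in_polys_over: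
  assumes k1: "is_subfield_C k1" and n: "n \<ge> 1"
    and m: "minimal_poly_over k1 (zeta n) m" "lead_coeff m = 1"
  shows "m \<in> polys_over (k1 \<inter> adjoin k (zeta n))"
proof -
  have "poly (monom 1 n - 1) (zeta n) = 0" using zeta_power_self[OF n] by (simp add: poly_monom)
  then obtain q where q: "monom 1 n - 1 = m * q"
    using minimal_poly_over_dvd[OF k1 m(1) X_pow_minus_one_in_polys_over[OF k1]] by blast
  then have "rsquarefree m" using rsquarefree_X_pow_minus_one[OF n] by (metis dvd_triv_left rsquarefree_dvd)
  then have m_eq: "m = (\<Prod>z | poly m z = 0. [:-z, 1:])"
    using complex_poly_decompose_rsquarefree[of m] m(2) by simp
  have "z \<in> adjoin k (zeta n)" if "poly m z = 0" for z
  proof (rule root_of_unity_in_adjoin_zeta[OF n])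
    have "poly (monom 1 n - 1) z = 0" using that q by simp
    then show "z ^ n = 1" by (simp add: poly_monom)
  qed
  then have "m \<in> polys_over (adjoin k (zeta n))"
    using m_eq linear_factors_in_polys_over[OF subfield_adjoin, of "{z. poly m z = 0}"] by auto
  moreover have "m \<in> polys_over k1" using m(1) by (simp add: minimal_poly_over_def)
  ultimately show ?thesis by (simp add: polys_over_def)
qed

text \<open>Well defined because two representatives of the same element of F[z] differ by a multiple of m.\<close>

lemma simple_ext_hom_exists:
  assumes F: "is_subfield_C F" and m: "minimal_poly_over F z m"
    and \<sigma>: "ring_hom_on F \<sigma>" and \<sigma>m: "map_poly \<sigma> m = m" and z': "poly m z' = 0"
  obtains g where "g \<in> extensional (simple_ext F z)"
    "\<And>p. p \<in> polys_over F \<Longrightarrow> g (poly p z) = poly (map_poly \<sigma> p) z'"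
proof -
  define rep where "rep y = (SOME p. p \<in> polys_over F \<and> poly p z = y)" for y
  define g where "g = restrict (\<lambda>y. poly (map_poly \<sigma> (rep y)) z') (simple_ext F z)"
  have "g (poly p z) = poly (map_poly \<sigma> p) z'" if p: "p \<in> polys_over F" for p
  proof -
    define r where "r = rep (poly p z)"
    have "\<exists>r. r \<in> polys_over F \<and> poly r z = poly p z" using p by blast
    then have r: "r \<in> polys_over F" "poly r z = poly p z"
      unfolding r_def rep_def by (metis (mono_tags, lifting) someI_ex)+
    obtain t where t: "t \<in> polys_over F" "p - r = m * t"
      using minimal_poly_over_dvd[OF F m polys_over_diff[OF F p r(1)]] r(2) by auto
    have mF: "m \<in> polys_over F" using m by (simp add: minimal_poly_over_def)
    have "map_poly \<sigma> p - map_poly \<sigma> r = m * map_poly \<sigma> t"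
      using map_poly_diff_on[OF \<sigma> F p r(1)] map_poly_mult_on[OF \<sigma> F mF t(1)] t(2) \<sigma>m by simp
    then have "poly (map_poly \<sigma> r) z' = poly (map_poly \<sigma> p) z'"
      using z' by (metis eq_iff_diff_eq_0 mult_zero_left poly_diff poly_mult)
    moreover have "poly p z \<in> simple_ext F z" using p unfolding simple_ext_def by blast
    ultimately show ?thesis by (simp add: g_def r_def)
  qed
  moreover have "g \<in> extensional (simple_ext F z)" by (simp add: g_def)
  ultimately show ?thesis using that by blast
qed

lemma ring_hom_on_simple_ext:
  assumes F: "is_subfield_C F" and \<sigma>: "ring_hom_on F \<sigma>"
    and g: "\<And>p. p \<in> polys_over F \<Longrightarrow> g (poly p z) = poly (map_poly \<sigma> p) z'"
  shows "ring_hom_on (simple_ext F z) g"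
  unfolding ring_hom_on_def
proof (intro conjI ballI)
  fix x y assume "x \<in> simple_ext F z" "y \<in> simple_ext F z"
  then obtain p r where p: "p \<in> polys_over F" "x = poly p z" and r: "r \<in> polys_over F" "y = poly r z"
    unfolding simple_ext_def by blast
  have "g (x + y) = poly (map_poly \<sigma> (p + r)) z'"
    using g[OF polys_over_add[OF F p(1) r(1)]] p r by simp
  then show "g (x + y) = g x + g y"
    using map_poly_add_on[OF \<sigma> F p(1) r(1)] g[OF p(1)] g[OF r(1)] p r by simp
  have "g (x * y) = poly (map_poly \<sigma> (p * r)) z'"
    using g[OF polys_over_mult[OF F p(1) r(1)]] p r by simp
  then show "g (x * y) = g x * g y"
    using map_poly_mult_on[OF \<sigma> F p(1) r(1)] g[OF p(1)] g[OF r(1)] p r by simp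
next
  show "g 1 = 1"
    using g[OF polys_over_one[OF F]] ring_hom_on_one[OF \<sigma>] ring_hom_on_zero[OF \<sigma> F]
    by (simp add: one_pCons map_poly_pCons)
qed

text \<open>Preimages of the coefficients under \<sigma>, evaluated at a preimage of z, give a preimage of every
  element of F[z].\<close>

lemma simple_ext_hom_onto:
  assumes F: "is_subfield_C F" and z: "algebraic_over F z" and \<sigma>: "bij_betw \<sigma> F F"
    and g: "ring_hom_on (simple_ext F z) g" "\<And>c. c \<in> F \<Longrightarrow> g c = \<sigma> c"
    and w: "w \<in> simple_ext F z" "g w = z"
  shows "simple_ext F z \<subseteq> g ` simple_ext F z"
proof
  fix y assume "y \<in> simple_ext F z"
  then obtain p where p: "p \<in> polys_over F" "y = poly p z" unfolding simple_ext_def by blast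
  have M: "is_subfield_C (simple_ext F z)" using F z by (rule subfield_simple_ext)
  have FM: "F \<subseteq> simple_ext F z" using adjoin_base adjoin_eq_simple_ext[OF F z] by blast
  define s where "s = inv_into F \<sigma>"
  have s: "s c \<in> F" "\<sigma> (s c) = c" if "c \<in> F" for c
    using that bij_betw_inv_into_right[OF \<sigma>] bij_betw_apply[OF bij_betw_inv_into[OF \<sigma>]]
    by (simp_all add: s_def)
  have g0: "g 0 = 0" using ring_hom_on_zero[OF g(1) M] .
  then have "\<sigma> 0 = 0" using g(2) subfield_zero[OF F] by metis
  then have s0: "s 0 = 0" using bij_betw_inv_into_left[OF \<sigma> subfield_zero[OF F]] by (simp add: s_def)
  define p' where "p' = map_poly s p"
  have p': "p' \<in> polys_over F"
    using s(1) coeff_in_polys_over[OF p(1)] by (simp add: p'_def polys_over_def coeff_map_poly s0)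
  have "map_poly g p' = p"
    using g0 s0 s g(2) coeff_in_polys_over[OF p(1)] coeff_in_polys_over[OF p']
    by (intro poly_eqI) (simp add: p'_def coeff_map_poly)
  then have "g (poly p' w) = y"
    using ring_hom_on_poly[OF g(1) M w(1) polys_over_mono[OF FM p']] w(2) p(2) by simp
  moreover have "poly p' w \<in> simple_ext F z" using M polys_over_mono[OF FM p'] w(1) by (rule poly_in_subfield)
  ultimately show "y \<in> g ` simple_ext F z" by blast
qed

lemma Gal_extend_to_simple_ext:
  assumes k: "is_subfield_C k" and k1: "is_subfield_C k1" and "k \<subseteq> k1" and \<sigma>: "\<sigma> \<in> Gal k1 k"
    and z: "algebraic_over k1 z" and m: "minimal_poly_over k1 z m" "m \<in> polys_over k"
    and z': "z' \<in> simple_ext k1 z" "poly m z' = 0"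
    and z_from_z': "q \<in> polys_over k" "poly q z' = z"
  obtains g where "g \<in> Gal (simple_ext k1 z) k" "restrict g k1 = \<sigma>"
    "\<And>p. p \<in> polys_over k1 \<Longrightarrow> g (poly p z) = poly (map_poly \<sigma> p) z'"
proof -
  define L where "L = simple_ext k1 z"
  have L: "is_subfield_C L" unfolding L_def using k1 z by (rule subfield_simple_ext)
  have "k1 \<subseteq> L" using adjoin_base adjoin_eq_simple_ext[OF k1 z] unfolding L_def by blast
  have hom_\<sigma>: "ring_hom_on k1 \<sigma>" using \<sigma> subfield_one[OF k] by (rule Gal_ring_hom_on)
  have \<sigma>_fixes: "map_poly \<sigma> p = p" if "p \<in> polys_over k" for p
    using Gal_fixes[OF \<sigma>] that by (rule map_poly_fixing)
  obtain g where g_ext: "g \<in> extensional L"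
    and g_poly: "\<And>p. p \<in> polys_over k1 \<Longrightarrow> g (poly p z) = poly (map_poly \<sigma> p) z'"
    using simple_ext_hom_exists[OF k1 m(1) hom_\<sigma> \<sigma>_fixes[OF m(2)] z'(2)] unfolding L_def by blast
  have hom: "ring_hom_on L g" unfolding L_def using k1 hom_\<sigma> g_poly by (rule ring_hom_on_simple_ext)
  have on_k1: "g c = \<sigma> c" if "c \<in> k1" for c
    using g_poly[OF polys_over_const[OF k1 that]] ring_hom_on_zero[OF hom_\<sigma> k1] by (simp add: map_poly_pCons)
  have "g ` L \<subseteq> L"
  proof
    fix y assume "y \<in> g ` L"
    then obtain p where "p \<in> polys_over k1" "y = poly (map_poly \<sigma> p) z'"
      using g_poly unfolding L_def simple_ext_def by auto
    moreover have "map_poly \<sigma> p \<in> polys_over L" if "p \<in> polys_over k1" for p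
      using hom_\<sigma> k1 _ that by (rule map_poly_in_polys_over) (use Gal_maps[OF \<sigma>] \<open>k1 \<subseteq> L\<close> in blast)
    ultimately show "y \<in> L" using L z'(1) by (simp add: poly_in_subfield L_def)
  qed
  moreover have "L \<subseteq> g ` L"
  proof -
    have "poly q z \<in> L" "g (poly q z) = z"
      using g_poly[OF polys_over_mono[OF \<open>k \<subseteq> k1\<close> z_from_z'(1)]] \<sigma>_fixes[OF z_from_z'(1)] z_from_z'
        polys_over_mono[OF \<open>k \<subseteq> k1\<close> z_from_z'(1)]
      by (auto simp: L_def simple_ext_def)
    then show ?thesis
      unfolding L_def using simple_ext_hom_onto[OF k1 z Gal_bij[OF \<sigma>] hom[unfolded L_def]] on_k1 by blast
  qed
  ultimately have bij: "bij_betw g L L" using ring_hom_on_inj[OF hom L] by (simp add: bij_betw_def)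
  have "g \<in> Gal L k"
  proof (rule GalI[OF g_ext bij])
    show "g (x + y) = g x + g y" "g (x * y) = g x * g y" if "x \<in> L" "y \<in> L" for x y
      using hom that by (simp_all add: ring_hom_on_add ring_hom_on_mult)
    show "g x = x" if "x \<in> k" for x using that \<open>k \<subseteq> k1\<close> on_k1 Gal_fixes[OF \<sigma>] by auto
  qed
  moreover have "restrict g k1 = \<sigma>"
    by (rule extensionalityI[OF restrict_extensional Gal_extensional[OF \<sigma>]]) (simp add: on_k1)
  ultimately show ?thesis using that g_poly unfolding L_def by blast
qed

text \<open>Extend \<sigma> by sending \<zeta> to g2 \<zeta>; this is legitimate because, when k1 \<inter> k(\<zeta>) = k, the minimal
  polynomial of \<zeta> over k1 has coefficients in k.\<close>

lemma Gal_glue_adjoin_zeta: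
  assumes k: "is_subfield_C k" and k1: "is_subfield_C k1" and "k \<subseteq> k1" and n: "n \<ge> 1"
    and disj: "k1 \<inter> adjoin k (zeta n) = k"
    and \<sigma>: "\<sigma> \<in> Gal k1 k" and g2: "g2 \<in> Gal (adjoin k (zeta n)) k"
  obtains g where "g \<in> Gal (adjoin k1 (zeta n)) k" "restrict g k1 = \<sigma>"
    "\<And>y. y \<in> adjoin k (zeta n) \<Longrightarrow> g y = g2 y"
proof -
  define K where "K = adjoin k (zeta n)"
  have K: "is_subfield_C K" and "k \<subseteq> K" and zK: "zeta n \<in> K"
    unfolding K_def by (simp_all add: subfield_adjoin adjoin_base adjoin_generator)
  have K_eq: "K = simple_ext k (zeta n)" unfolding K_def using k algebraic_zeta[OF k n] by (rule adjoin_eq_simple_ext)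
  have alg: "algebraic_over k1 (zeta n)" using k1 n by (rule algebraic_zeta)
  have L_eq: "adjoin k1 (zeta n) = simple_ext k1 (zeta n)" using k1 alg by (rule adjoin_eq_simple_ext)
  have KL: "K \<subseteq> simple_ext k1 (zeta n)" unfolding K_def L_eq[symmetric] using \<open>k \<subseteq> k1\<close> by (rule adjoin_mono)
  note g2 = g2[folded K_def]
  have g2_poly: "g2 (poly p (zeta n)) = poly p (g2 (zeta n))" if "p \<in> polys_over k" for p
    using Gal_ring_hom_on[OF g2 subfield_one[OF k]] K \<open>k \<subseteq> K\<close> Gal_fixes[OF g2] that zK
    by (rule ring_hom_on_poly_fixing)
  obtain m where m: "minimal_poly_over k1 (zeta n) m" "lead_coeff m = 1"
    using minimal_poly_over_exists[OF k1 alg] .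
  have mk: "m \<in> polys_over k" using minimal_poly_zeta_in_polys_over[OF k1 n m, of k] disj by simp
  have "poly m (g2 (zeta n)) = 0"
    using g2_poly[OF mk] m(1) ring_hom_on_zero[OF Gal_ring_hom_on[OF g2 subfield_one[OF k]] K]
    by (simp add: minimal_poly_over_def)
  moreover have "g2 (zeta n) \<in> simple_ext k1 (zeta n)" using Gal_maps[OF g2 zK] KL by blast
  moreover obtain q where "q \<in> polys_over k" "poly q (g2 (zeta n)) = zeta n"
  proof -
    have "zeta n \<in> g2 ` K" using zK Gal_image[OF g2] by simp
    then obtain p where "p \<in> polys_over k" "zeta n = g2 (poly p (zeta n))" unfolding K_eq simple_ext_def by blast
    then show ?thesis using that g2_poly by simp
  qed
  ultimately obtain g where g: "g \<in> Gal (simple_ext k1 (zeta n)) k" "restrict g k1 = \<sigma>"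
    and g_poly: "\<And>p. p \<in> polys_over k1 \<Longrightarrow> g (poly p (zeta n)) = poly (map_poly \<sigma> p) (g2 (zeta n))"
    using Gal_extend_to_simple_ext[OF k k1 \<open>k \<subseteq> k1\<close> \<sigma> alg m(1) mk] by blast
  have "g y = g2 y" if "y \<in> K" for y
  proof -
    obtain p where p: "p \<in> polys_over k" "y = poly p (zeta n)" using \<open>y \<in> K\<close> unfolding K_eq simple_ext_def by blast
    then show ?thesis
      using g_poly[OF polys_over_mono[OF \<open>k \<subseteq> k1\<close> p(1)]] map_poly_fixing[OF Gal_fixes[OF \<sigma>] p(1)] g2_poly
      by simp
  qed
  then show ?thesis using that g unfolding L_eq K_def by blast
qed


lemma fixed_field_restrict_subset:
  assumes "K \<subseteq> L" and "\<And>s. s \<in> S \<Longrightarrow> \<exists>t\<in>T. \<forall>x\<in>K. s x = t x"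
  shows "fixed_field K T \<subseteq> fixed_field L S \<inter> K"
  using assms unfolding fixed_field_def by fastforce

lemma fixed_field_lift_subset:
  assumes "\<And>t. t \<in> T \<Longrightarrow> \<exists>s\<in>S. \<forall>x\<in>K. s x = t x"
  shows "fixed_field L S \<inter> K \<subseteq> fixed_field K T"
  using assms unfolding fixed_field_def by fastforce

lemma restrict_Gt_rel_in_G_set:
  assumes gal: "galois_ext k1 k" and fin: "finite (Gal k1 k)" and \<theta>: "\<theta> ` Gal k1 k \<subseteq> carrier G"
    and n: "group.ord H \<tau> \<ge> 1" and g: "g \<in> Gt_rel k1 k \<theta> H \<mu> \<tau>"
  shows "restrict g (adjoin k (zeta (group.ord H \<tau>))) \<in> G_set k G H \<mu> \<tau>"
proof -
  define n where "n = group.ord H \<tau>"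
  have k: "is_subfield_C k" and "k \<subseteq> k1" using gal by (auto simp: galois_ext_def)
  have gL: "g \<in> Gal (adjoin k1 (zeta n)) k"
    and eq: "\<mu> (\<theta> (restrict g k1)) \<tau> = \<tau> [^]\<^bsub>H\<^esub> nu n (restrict g (adjoin k (zeta n)))"
    using g by (simp_all add: Gt_rel_def Let_def n_def)
  have "restrict g (adjoin k (zeta n)) \<in> Gal (adjoin k (zeta n)) k"
    using Gal_restrict_adjoin_zeta[OF k n[folded n_def] subfield_adjoin adjoin_mono[OF \<open>k \<subseteq> k1\<close>] gL] .
  moreover have "\<theta> (restrict g k1) \<in> carrier G"
    using Gal_restrict_galois_ext[OF gal fin subfield_adjoin adjoin_base gL] \<theta> by blast
  ultimately show ?thesis using eq by (auto simp: G_set_def Let_def n_def)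
qed

lemma G_set_lifts_to_Gt_rel:
  assumes gal: "galois_ext k1 k" and \<theta>: "carrier G \<subseteq> \<theta> ` Gal k1 k"
    and n: "group.ord H \<tau> \<ge> 1" and disj: "k1 \<inter> adjoin k (zeta (group.ord H \<tau>)) = k"
    and g2: "g2 \<in> G_set k G H \<mu> \<tau>"
  shows "\<exists>g\<in>Gt_rel k1 k \<theta> H \<mu> \<tau>. \<forall>y\<in>adjoin k (zeta (group.ord H \<tau>)). g y = g2 y"
proof -
  define n where "n = group.ord H \<tau>"
  have k: "is_subfield_C k" and k1: "is_subfield_C k1" and "k \<subseteq> k1"
    using gal by (auto simp: galois_ext_def)
  obtain g1 where g2K: "g2 \<in> Gal (adjoin k (zeta n)) k" and "g1 \<in> carrier G"
    and eq: "\<mu> g1 \<tau> = \<tau> [^]\<^bsub>H\<^esub> nu n g2"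
    using g2 by (auto simp: G_set_def Let_def n_def)
  then obtain \<sigma> where \<sigma>: "\<sigma> \<in> Gal k1 k" "\<theta> \<sigma> = g1" using \<theta> by blast
  obtain g where g: "g \<in> Gal (adjoin k1 (zeta n)) k" "restrict g k1 = \<sigma>"
    and on_K: "\<And>y. y \<in> adjoin k (zeta n) \<Longrightarrow> g y = g2 y"
    using Gal_glue_adjoin_zeta[OF k k1 \<open>k \<subseteq> k1\<close> n[folded n_def] disj[folded n_def] \<sigma>(1) g2K] by blast
  have "nu n (restrict g (adjoin k (zeta n))) = nu n g2"
    using on_K[OF adjoin_generator] by (simp add: nu_def adjoin_generator)
  then have "g \<in> Gt_rel k1 k \<theta> H \<mu> \<tau>" using g \<sigma>(2) eq by (simp add: Gt_rel_def Let_def n_def)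
  then show ?thesis using on_K by (auto simp: n_def)
qed

theorem mainTheorem14:
  fixes k k1 :: "complex set"
    and G :: "('g, 'c) monoid_scheme" and H :: "('h, 'd) monoid_scheme"
    and \<mu> :: "'g \<Rightarrow> 'h \<Rightarrow> 'h" and \<theta> :: "(complex \<Rightarrow> complex) \<Rightarrow> 'g" and \<tau> :: 'h
  assumes "number_field k"
    and "group G" and "finite (carrier G)"
    and "comm_group H" and "finite (carrier H)"
    and "\<mu> \<in> hom G (AutoGroup H)"
    and "galois_ext k1 k"
    and "\<theta> \<in> iso (galois_group k1 k) G"
    and "\<tau> \<in> carrier H"
  shows "E_field k G H \<mu> \<tau> \<subseteq> Z_field k1 k \<theta> H \<mu> \<tau> \<inter> adjoin k (zeta (group.ord H \<tau>)) \<and>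
         (k1 \<inter> adjoin k (zeta (group.ord H \<tau>)) = k \<longrightarrow>
         E_field k G H \<mu> \<tau> = Z_field k1 k \<theta> H \<mu> \<tau> \<inter> adjoin k (zeta (group.ord H \<tau>)))"
proof -
  have gal: "galois_ext k1 k" by fact
  have \<theta>: "bij_betw \<theta> (Gal k1 k) (carrier G)"
    using assms(8) by (simp add: iso_def galois_group_def)
  then have fin: "finite (Gal k1 k)" using assms(3) by (simp add: bij_betw_finite)
  have "group H" using assms(4) by (simp add: comm_group_def)
  then have n: "group.ord H \<tau> \<ge> 1" using assms(5,9) by (rule group.ord_ge_1)
  define K where "K = adjoin k (zeta (group.ord H \<tau>))"
  define L where "L = adjoin k1 (zeta (group.ord H \<tau>))"
  have E: "E_field k G H \<mu> \<tau> = fixed_field K (G_set k G H \<mu> \<tau>)" by (simp add: E_field_def K_def)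
  have Z: "Z_field k1 k \<theta> H \<mu> \<tau> = fixed_field L (Gt_rel k1 k \<theta> H \<mu> \<tau>)" by (simp add: Z_field_def L_def)
  have "K \<subseteq> L" unfolding K_def L_def using gal by (intro adjoin_mono) (simp add: galois_ext_def)
  have \<theta>_image: "\<theta> ` Gal k1 k = carrier G" using \<theta> by (simp add: bij_betw_def)
  have "E_field k G H \<mu> \<tau> \<subseteq> Z_field k1 k \<theta> H \<mu> \<tau> \<inter> K"
    unfolding E Z
  proof (rule fixed_field_restrict_subset[OF \<open>K \<subseteq> L\<close>])
    fix g assume "g \<in> Gt_rel k1 k \<theta> H \<mu> \<tau>"
    then have restricted: "restrict g K \<in> G_set k G H \<mu> \<tau>"
      unfolding K_def by (rule restrict_Gt_rel_in_G_set[OF gal fin equalityD1[OF \<theta>_image] n])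
    show "\<exists>t\<in>G_set k G H \<mu> \<tau>. \<forall>x\<in>K. g x = t x" by (intro bexI[OF _ restricted]) simp
  qed
  moreover have "Z_field k1 k \<theta> H \<mu> \<tau> \<inter> K \<subseteq> E_field k G H \<mu> \<tau>" if disj: "k1 \<inter> K = k"
    unfolding E Z
  proof (rule fixed_field_lift_subset)
    fix g2 assume "g2 \<in> G_set k G H \<mu> \<tau>"
    then show "\<exists>g\<in>Gt_rel k1 k \<theta> H \<mu> \<tau>. \<forall>y\<in>K. g y = g2 y"
      unfolding K_def by (rule G_set_lifts_to_Gt_rel[OF gal equalityD2[OF \<theta>_image] n disj[unfolded K_def]])
  qed
  ultimately show ?thesis unfolding K_def by blast
qed

end
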